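(* Assume Assumption A2 and Assumption A1(p) for some $p\ge1$ (see context), and let $0<\eta_s\le\eta_{\infty,p}$ for all $s$. Then for every $t\ge1$, \[\|\rho^{\mathrm{avg}}_t\|\le\frac{\eta_t^2H_t^2}{2}\zeta_1\zeta_2,\qquad\text{where }\ \rho^{\mathrm{avg}}_t=\frac1N\sum_{c=1}^N\big(I-(I-\eta_t\bar{\mathbf A}^c)^{H_t}\big)(\theta^c_\star-\theta_\star).\]
   Context: Setting: $N$ agents, dimension $d$. For each agent $c$: distribution $\pi_c$ on $(\mathsf Z,\mathcal Z)$, measurable $\mathbf A^c:\mathsf Z\to\mathbb R^{d\times d}$, $\mathbf b^c:\mathsf Z\to\mathbb R^d$, $\bar{\mathbf A}^c=\mathbb E_{\pi_c}[\mathbf A^c(Z)]$, $\bar{\mathbf b}^c=\mathbb E_{\pi_c}[\mathbf b^c(Z)]$, $\bar{\mathbf A}=N^{-1}\sum_c\bar{\mathbf A}^c$; $\theta_\star$ solves $\bar{\mathbf A}\theta_\star=N^{-1}\sum_c\bar{\mathbf b}^c$; $\theta^c_\star$ solves $\bar{\mathbf A}^c\theta^c_\star=\bar{\mathbf b}^c$; $\varepsilon^c(z)=(\mathbf A^c(z)-\bar{\mathbf A}^c)\theta^c_\star-(\mathbf b^c(z)-\bar{\mathbf b}^c)$. Assumption A1(p): each $-\bar{\mathbf A}^c$ Hurwitz; there exist $a>0,\eta_{\infty,p}>0$, $\eta_{\infty,p}a\le1/2$, with $\mathbb E^{1/p}_{Z\sim\pi_c}[\|(I-\eta\mathbf A^c(Z))u\|^p]\le(1-\eta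 a)\|u\|$ for all $0<\eta<\eta_{\infty,p}$, $u$. Assumption A2: samples i.i.d. per agent and independent; $\max_c\sup_z\|\varepsilon^c(z)\|<\infty$, $\max_c\sup_z\max(\|\mathbf A^c(z)\|,\|\mathbf A^c(z)-\bar{\mathbf A}^c\|)<\infty$. $H_t\in\mathbb N$ are the local step numbers. $\zeta_1^2=N^{-1}\sum_c\|\bar{\mathbf A}^c(\theta^c_\star-\theta_\star)\|^2$, $\zeta_2^2=N^{-1}\sum_c\|\bar{\mathbf A}^c-\bar{\mathbf A}\|^2$. *)

theory Defs
  imports "HOL-Probability.Probability"
begin

definition opnorm :: "real^'d^'d \<Rightarrow> real" where
  "opnorm M = onorm (\<lambda>x. M *v x)"

fun matpow :: "real^'d^'d \<Rightarrow> nat \<Rightarrow> real^'d^'d" where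
  "matpow M 0 = mat 1"
| "matpow M (Suc k) = M ** matpow M k"

definition hurwitz :: "real^'d^'d \<Rightarrow> bool" where
  "hurwitz M \<longleftrightarrow>
     (\<forall>(lam::complex) (v::complex^'d). v \<noteq> 0 \<and>
        (\<chi> i j. complex_of_real (M $ i $ j)) *v v = lam *s v \<longrightarrow> Re lam < 0)"

end

theory Submission
  imports Defs
begin

(* Each local matrix P_c = I - eta Abar_c is nonexpansive in operator norm: A1 bounds the
   L^p norm of the random step I - eta A_c(Z), which dominates the norm of its mean, and
   continuity in eta extends this from eta < eta_inf to eta = eta_inf; hence the average
   Q = I - eta Abar is nonexpansive too.  Writing I - P_c^H = sum_{k<H} P_c^k (I - P_c), the
   identity sum_c Abar_c (theta_c - theta) = 0 allows replacing P_c^k by Q^k at no cost, and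
   |P_c^k - Q^k| <= k |P_c - Q| = k eta |Abar_c - Abar|.  Summing over k < H gives H^2/2, and
   Cauchy-Schwarz over the agents gives zeta_1 zeta_2. *)

lemma opnorm_mult_vec_le: "norm (M *v x) \<le> opnorm M * norm x"
  unfolding opnorm_def by (rule onorm) simp

lemma opnorm_nonneg: "0 \<le> opnorm M"
  unfolding opnorm_def by (rule onorm_pos_le) simp

lemma opnorm_le:
  fixes M :: "real^'d^'d"
  assumes "\<And>x. norm (M *v x) \<le> b * norm x"
  shows "opnorm M \<le> b"
  unfolding opnorm_def by (rule onorm_le) (rule assms)

lemma opnorm_mat_1_le: "opnorm (mat 1 :: real^'d^'d) \<le> 1"
  by (rule opnorm_le) simp

lemma opnorm_matrix_mult_le: "opnorm (M ** M') \<le> opnorm M * opnorm M'"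
proof (rule opnorm_le)
  fix x
  have "norm ((M ** M') *v x) \<le> opnorm M * norm (M' *v x)"
    by (simp add: matrix_vector_mul_assoc[symmetric] opnorm_mult_vec_le)
  also have "\<dots> \<le> opnorm M * (opnorm M' * norm x)"
    by (intro mult_left_mono opnorm_mult_vec_le opnorm_nonneg)
  finally show "norm ((M ** M') *v x) \<le> opnorm M * opnorm M' * norm x"
    by (simp add: mult.assoc)
qed

lemma opnorm_add_le: "opnorm (M + M') \<le> opnorm M + opnorm M'"
proof (rule opnorm_le)
  fix x
  have "norm ((M + M') *v x) \<le> norm (M *v x) + norm (M' *v x)"
    by (simp add: matrix_vector_mult_add_rdistrib norm_triangle_ineq)
  also have "\<dots> \<le> (opnorm M + opnorm M') * norm x"
    using opnorm_mult_vec_le[of M x] opnorm_mult_vec_le[of M' x] by (simp add: distrib_right)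
  finally show "norm ((M + M') *v x) \<le> (opnorm M + opnorm M') * norm x" .
qed

lemma opnorm_scaleR: "opnorm (r *\<^sub>R M) = \<bar>r\<bar> * opnorm M"
proof -
  have "(\<lambda>x. (r *\<^sub>R M) *v x) = (\<lambda>x. r *\<^sub>R (M *v x))"
    by (simp add: scaleR_matrix_vector_assoc)
  then show ?thesis
    unfolding opnorm_def by (simp add: onorm_scaleR)
qed

lemma opnorm_minus_commute: "opnorm (M - M') = opnorm (M' - M)"
proof -
  have "(\<lambda>x. (M - M') *v x) = (\<lambda>x. - ((M' - M) *v x))"
    by (simp add: matrix_vector_mult_diff_rdistrib)
  then show ?thesis
    unfolding opnorm_def by (simp add: onorm_neg)
qed

lemma matrix_vector_mult_sum_left: "sum M S *v x = (\<Sum>s\<in>S. M s *v x)"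
  by (induction S rule: infinite_finite_induct) (simp_all add: matrix_vector_mult_add_rdistrib)

lemma opnorm_sum_le:
  assumes "finite S"
  shows "opnorm (sum M S) \<le> (\<Sum>s\<in>S. opnorm (M s))"
  using onorm_sum[OF assms, of "\<lambda>s x. M s *v x"]
  by (simp add: opnorm_def matrix_vector_mult_sum_left)

lemma norm_matrix_le_opnorm:
  fixes M :: "real^'d^'d"
  shows "norm M \<le> real CARD('d) * real CARD('d) * opnorm M"
proof -
  have "norm M \<le> (\<Sum>i\<in>UNIV. norm (M $ i))"
    by (simp add: norm_vec_def L2_set_le_sum)
  also have "\<dots> \<le> (\<Sum>i\<in>(UNIV::'d set). \<Sum>j\<in>(UNIV::'d set). opnorm M)"
    unfolding opnorm_def
    by (intro sum_mono order_trans[OF norm_le_l1_cart] matrix_component_le_onorm)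
  finally show ?thesis by simp
qed

lemma opnorm_matpow_le_1:
  assumes "opnorm P \<le> 1"
  shows "opnorm (matpow P k) \<le> 1"
proof (induction k)
  case 0
  then show ?case by (simp add: opnorm_mat_1_le)
next
  case (Suc k)
  have "opnorm (P ** matpow P k) \<le> opnorm P * opnorm (matpow P k)"
    by (rule opnorm_matrix_mult_le)
  also have "\<dots> \<le> 1"
    using mult_le_one[OF assms opnorm_nonneg Suc.IH] .
  finally show ?case by simp
qed

lemma matpow_Suc_diff:
  "matpow P (Suc k) - matpow Q (Suc k) = P ** (matpow P k - matpow Q k) + (P - Q) ** matpow Q k"
  unfolding matrix_eq
  by (simp add: matrix_vector_mul_assoc[symmetric] matrix_vector_mult_diff_distrib
      matrix_vector_mult_diff_rdistrib matrix_vector_mult_add_rdistrib)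

lemma opnorm_matpow_diff_le:
  assumes P: "opnorm P \<le> 1" and Q: "opnorm Q \<le> 1"
  shows "opnorm (matpow P k - matpow Q k) \<le> real k * opnorm (P - Q)"
proof (induction k)
  case 0
  then show ?case by (simp add: opnorm_def onorm_zero)
next
  case (Suc k)
  have "opnorm (matpow P (Suc k) - matpow Q (Suc k))
      \<le> opnorm P * opnorm (matpow P k - matpow Q k) + opnorm (P - Q) * opnorm (matpow Q k)"
    unfolding matpow_Suc_diff
    by (intro order_trans[OF opnorm_add_le] add_mono opnorm_matrix_mult_le)
  also have "\<dots> \<le> 1 * (real k * opnorm (P - Q)) + opnorm (P - Q) * 1"
    using P Suc.IH opnorm_matpow_le_1[OF Q, of k] opnorm_nonneg
    by (intro add_mono mult_mono) auto
  finally show ?case by (simp add: algebra_simps)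
qed

lemma mat_1_minus_matpow_mult_vec:
  "(mat 1 - matpow P h) *v w = (\<Sum>k<h. matpow P k *v ((mat 1 - P) *v w))"
proof (induction h)
  case 0
  then show ?case by simp
next
  case (Suc h)
  have "(mat 1 - matpow P (Suc h)) *v w = (mat 1 - P) *v w + P *v ((mat 1 - matpow P h) *v w)"
    by (simp add: matrix_vector_mult_diff_rdistrib matrix_vector_mult_diff_distrib matrix_vector_mul_assoc)
  also have "\<dots> = (\<Sum>k<Suc h. matpow P k *v ((mat 1 - P) *v w))"
    unfolding Suc.IH sum.lessThan_Suc_shift
    by (simp add: linear_sum[OF matrix_vector_mul_linear] matrix_vector_mul_assoc matrix_mul_assoc)
  finally show ?case .
qed

lemma sum_lessThan_of_nat_le: "(\<Sum>k<h. real k) \<le> (real h)\<^sup>2 / 2"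
  by (induction h) (simp_all add: power2_eq_square field_simps)

lemma norm_sum_matpow_diff_le:
  assumes "opnorm P \<le> 1" "opnorm Q \<le> 1"
  shows "norm (\<Sum>k<h. (matpow P k - matpow Q k) *v v) \<le> (real h)\<^sup>2 / 2 * opnorm (P - Q) * norm v"
proof -
  have "norm (\<Sum>k<h. (matpow P k - matpow Q k) *v v) \<le> (\<Sum>k<h. opnorm (matpow P k - matpow Q k) * norm v)"
    by (intro order_trans[OF norm_sum] sum_mono opnorm_mult_vec_le)
  also have "\<dots> \<le> (\<Sum>k<h. real k * opnorm (P - Q) * norm v)"
    by (intro sum_mono mult_right_mono opnorm_matpow_diff_le assms) simp
  also have "\<dots> = (\<Sum>k<h. real k) * (opnorm (P - Q) * norm v)"
    by (simp add: sum_distrib_right mult.assoc)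
  also have "\<dots> \<le> (real h)\<^sup>2 / 2 * (opnorm (P - Q) * norm v)"
    by (intro mult_right_mono sum_lessThan_of_nat_le) (simp add: opnorm_nonneg)
  finally show ?thesis by (simp add: mult.assoc)
qed

lemma Youngs_inequality_unit:
  fixes s p :: real
  assumes "0 \<le> s" "1 \<le> p"
  shows "s \<le> s powr p / p + (1 - 1 / p)"
proof (cases "s = 0")
  case True
  then show ?thesis using assms by (simp add: field_simps)
next
  case False
  then have "(s powr p) powr (1 / p) * 1 powr (1 - 1 / p) \<le> (1 / p) * s powr p + (1 - 1 / p) * 1"
    using assms by (intro Youngs_inequality_0) auto
  then show ?thesis
    using assms by (simp add: powr_powr)
qed

lemma (in prob_space) expectation_le_Lp_norm:
  fixes g :: "'a \<Rightarrow> real"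
  assumes p: "1 \<le> p" and g: "integrable M g" and gp: "integrable M (\<lambda>x. g x powr p)"
    and nonneg: "\<And>x. x \<in> space M \<Longrightarrow> 0 \<le> g x"
  shows "expectation g \<le> (expectation (\<lambda>x. g x powr p)) powr (1 / p)"
proof -
  define R where "R = (expectation (\<lambda>x. g x powr p)) powr (1 / p)"
  have "0 \<le> expectation (\<lambda>x. g x powr p)"
    by (simp add: integral_nonneg_AE)
  then have Rp: "R powr p = expectation (\<lambda>x. g x powr p)"
    unfolding R_def using p by (simp add: powr_powr)
  consider "R = 0" | "R > 0"
    unfolding R_def by fastforce
  then show ?thesis
  proof cases
    case 1
    then have "AE x in M. g x powr p = 0"
      using Rp gp p by (subst integral_nonneg_eq_0_iff_AE[symmetric]) auto
    then have "AE x in M. g x = 0"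
      by simp
    then show ?thesis
      using 1 unfolding R_def[symmetric] by (simp add: integral_eq_zero_AE)
  next
    case 2
    (* Young's inequality at g x / R, integrated against the p-th moment R powr p. *)
    define c where "c = R / (p * R powr p)"
    have pointwise: "g x \<le> c * g x powr p + R * (1 - 1 / p)" if "x \<in> space M" for x
    proof -
      have "g x / R \<le> (g x / R) powr p / p + (1 - 1 / p)"
        using Youngs_inequality_unit[of "g x / R" p] nonneg[OF that] 2 p by simp
      then have "g x \<le> R * ((g x / R) powr p / p + (1 - 1 / p))"
        using 2 by (simp add: pos_divide_le_eq mult.commute)
      then show ?thesis
        using 2 nonneg[OF that] unfolding c_def by (simp add: powr_divide field_simps)
    qed
    have "expectation g \<le> expectation (\<lambda>x. c * g x powr p + R * (1 - 1 / p))"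
      using g gp pointwise by (intro integral_mono) auto
    also have "\<dots> = c * R powr p + R * (1 - 1 / p)"
      using gp Rp by (simp add: prob_space)
    also have "\<dots> = R"
      unfolding c_def using 2 p by (simp add: field_simps)
    finally show ?thesis
      unfolding R_def .
  qed
qed

lemma bounded_linear_matrix_vector_mult_left: "bounded_linear (\<lambda>M::real^'d^'d. M *v u)"
proof -
  have "linear (\<lambda>M::real^'d^'d. M *v u)"
    by (rule linearI) (simp_all add: matrix_vector_mult_add_rdistrib scaleR_matrix_vector_assoc)
  then show ?thesis
    by (simp add: linear_conv_bounded_linear)
qed

lemma mat_1_minus_scaleR_mult_vec: "(mat 1 - e *\<^sub>R M) *v u = u - e *\<^sub>R (M *v u)"
  for M :: "real^'d^'d"
  by (simp add: matrix_vector_mult_diff_rdistrib scaleR_matrix_vector_assoc)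

lemma (in prob_space) integrable_opnorm_bounded:
  fixes F :: "'a \<Rightarrow> real^'d^'d"
  assumes "F \<in> borel_measurable M" and "\<And>z. z \<in> space M \<Longrightarrow> opnorm (F z) \<le> B"
  shows "integrable M F"
proof (rule integrable_const_bound)
  show "AE z in M. norm (F z) \<le> real CARD('d) * real CARD('d) * B"
    using assms(2) by (intro AE_I2 order_trans[OF norm_matrix_le_opnorm]) (simp add: mult_left_mono)
qed fact

lemma (in prob_space) norm_mean_step_le_Lp_norm:
  fixes F :: "'a \<Rightarrow> real^'d^'d"
  assumes F_meas: "F \<in> borel_measurable M" and F_bdd: "\<And>z. z \<in> space M \<Longrightarrow> opnorm (F z) \<le> B"
    and p: "1 \<le> p"
  shows "norm ((mat 1 - e *\<^sub>R expectation F) *v u)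
    \<le> (\<integral>z. norm ((mat 1 - e *\<^sub>R F z) *v u) powr p \<partial>M) powr (1 / p)"
proof -
  define f where "f z = (mat 1 - e *\<^sub>R F z) *v u" for z
  have f_eq: "f = (\<lambda>z. u - e *\<^sub>R (F z *v u))"
    unfolding f_def by (simp add: mat_1_minus_scaleR_mult_vec)
  have F_int: "integrable M F"
    using F_meas F_bdd by (rule integrable_opnorm_bounded)
  have Fu_int: "integrable M (\<lambda>z. F z *v u)"
    using bounded_linear_matrix_vector_mult_left F_int by (rule integrable_bounded_linear)
  then have f_int: "integrable M f"
    unfolding f_eq by simp
  have "expectation f = u - e *\<^sub>R (expectation F *v u)"
    unfolding f_eq using Fu_int
    by (simp add: prob_space integral_bounded_linear[OF bounded_linear_matrix_vector_mult_left F_int])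
  then have mean_f: "expectation f = (mat 1 - e *\<^sub>R expectation F) *v u"
    by (simp add: mat_1_minus_scaleR_mult_vec)
  have f_bdd: "norm (f z) powr p \<le> ((1 + \<bar>e\<bar> * B) * norm u) powr p" if "z \<in> space M" for z
  proof -
    have "norm (f z) \<le> norm u + \<bar>e\<bar> * norm (F z *v u)"
      unfolding f_eq by (metis norm_scaleR norm_triangle_ineq4)
    also have "\<dots> \<le> norm u + \<bar>e\<bar> * (B * norm u)"
    proof -
      have "norm (F z *v u) \<le> B * norm u"
        using F_bdd[OF that] opnorm_mult_vec_le[of "F z" u]
        by (meson mult_right_mono norm_ge_zero order_trans)
      then show ?thesis
        by (simp add: mult_left_mono)
    qed
    finally have "norm (f z) \<le> (1 + \<bar>e\<bar> * B) * norm u"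
      by (simp add: algebra_simps)
    then show ?thesis
      using p by (intro powr_mono2) auto
  qed
  have fp_int: "integrable M (\<lambda>z. norm (f z) powr p)"
  proof (rule integrable_const_bound)
    show "AE z in M. norm (norm (f z) powr p) \<le> ((1 + \<bar>e\<bar> * B) * norm u) powr p"
      using f_bdd by (intro AE_I2) simp
    show "(\<lambda>z. norm (f z) powr p) \<in> borel_measurable M"
      using borel_measurable_integrable[OF f_int] by measurable
  qed
  have "norm ((mat 1 - e *\<^sub>R expectation F) *v u) \<le> expectation (\<lambda>z. norm (f z))"
    unfolding mean_f[symmetric] by (rule integral_norm_bound)
  also have "\<dots> \<le> (\<integral>z. norm (f z) powr p \<partial>M) powr (1 / p)"
    using p f_int fp_int by (intro expectation_le_Lp_norm) auto
  finally show ?thesis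
    unfolding f_def .
qed

lemma opnorm_mat_1_minus_scaleR_le_1_at_endpoint:
  fixes M :: "real^'d^'d"
  assumes E: "0 < E" and below: "\<And>e. 0 < e \<Longrightarrow> e < E \<Longrightarrow> opnorm (mat 1 - e *\<^sub>R M) \<le> 1"
  shows "opnorm (mat 1 - E *\<^sub>R M) \<le> 1"
proof (rule opnorm_le)
  fix x
  show "norm ((mat 1 - E *\<^sub>R M) *v x) \<le> 1 * norm x"
    unfolding mat_1_minus_scaleR_mult_vec
  proof (rule tendsto_upperbound)
    show "((\<lambda>e. norm (x - e *\<^sub>R (M *v x))) \<longlongrightarrow> norm (x - E *\<^sub>R (M *v x))) (at_left E)"
      by (intro tendsto_intros)
    show "\<forall>\<^sub>F e in at_left E. norm (x - e *\<^sub>R (M *v x)) \<le> 1 * norm x"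
      using eventually_at_left_real[OF E]
    proof eventually_elim
      case (elim e)
      then have "opnorm (mat 1 - e *\<^sub>R M) * norm x \<le> 1 * norm x"
        using below[of e] by (intro mult_right_mono) auto
      then show ?case
        using opnorm_mult_vec_le[of "mat 1 - e *\<^sub>R M" x] by (simp add: mat_1_minus_scaleR_mult_vec)
    qed
  qed simp
qed

lemma (in prob_space) opnorm_mean_step_le_1:
  fixes F :: "'a \<Rightarrow> real^'d^'d"
  assumes F_meas: "F \<in> borel_measurable M" and F_bdd: "\<And>z. z \<in> space M \<Longrightarrow> opnorm (F z) \<le> B"
    and p: "1 \<le> p" and a: "0 \<le> a" and E: "0 < E" and e: "0 < e" "e \<le> E"
    and contraction: "\<And>e u. 0 < e \<Longrightarrow> e < E \<Longrightarrow>
      (\<integral>z. norm ((mat 1 - e *\<^sub>R F z) *v u) powr p \<partial>M) powr (1 / p) \<le> (1 - e * a) * norm u"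
  shows "opnorm (mat 1 - e *\<^sub>R expectation F) \<le> 1"
proof -
  have below: "opnorm (mat 1 - e' *\<^sub>R expectation F) \<le> 1" if e': "0 < e'" "e' < E" for e'
  proof (rule opnorm_le)
    fix u
    have "norm ((mat 1 - e' *\<^sub>R expectation F) *v u)
        \<le> (\<integral>z. norm ((mat 1 - e' *\<^sub>R F z) *v u) powr p \<partial>M) powr (1 / p)"
      using F_meas F_bdd p by (rule norm_mean_step_le_Lp_norm)
    also have "\<dots> \<le> (1 - e' * a) * norm u"
      using e' by (rule contraction)
    also have "\<dots> \<le> 1 * norm u"
      using e' a by (intro mult_right_mono) auto
    finally show "norm ((mat 1 - e' *\<^sub>R expectation F) *v u) \<le> 1 * norm u" .
  qed
  show ?thesis
  proof (cases "e < E")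
    case True
    then show ?thesis
      using below e by simp
  next
    case False
    then show ?thesis
      using opnorm_mat_1_minus_scaleR_le_1_at_endpoint[OF E below] e by simp
  qed
qed

lemma opnorm_mean_le_1:
  fixes P :: "nat \<Rightarrow> real^'d^'d"
  assumes N: "0 < N" and P: "\<And>c. c < N \<Longrightarrow> opnorm (P c) \<le> 1"
  shows "opnorm ((1 / real N) *\<^sub>R (\<Sum>c<N. P c)) \<le> 1"
proof -
  have "opnorm ((1 / real N) *\<^sub>R (\<Sum>c<N. P c)) \<le> (1 / real N) * (\<Sum>c<N. opnorm (P c))"
    unfolding opnorm_scaleR by (simp add: divide_right_mono opnorm_sum_le)
  also have "\<dots> \<le> (1 / real N) * (\<Sum>c<N. 1)"
    using P by (intro mult_left_mono sum_mono) auto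
  finally show ?thesis
    using N by simp
qed

lemma mean_mult_le_sqrt_mean_squares:
  fixes x y :: "nat \<Rightarrow> real"
  assumes N: "0 < N"
  shows "(1 / real N) * (\<Sum>c<N. x c * y c)
    \<le> sqrt ((1 / real N) * (\<Sum>c<N. (x c)\<^sup>2)) * sqrt ((1 / real N) * (\<Sum>c<N. (y c)\<^sup>2))"
proof -
  have "(\<Sum>c<N. x c * y c) \<le> sqrt ((\<Sum>c<N. x c * y c)\<^sup>2)"
    by simp
  also have "\<dots> \<le> sqrt ((\<Sum>c<N. (x c)\<^sup>2) * (\<Sum>c<N. (y c)\<^sup>2))"
    by (rule real_sqrt_le_mono, rule Cauchy_Schwarz_ineq_sum)
  finally have CS: "(\<Sum>c<N. x c * y c) \<le> sqrt (\<Sum>c<N. (x c)\<^sup>2) * sqrt (\<Sum>c<N. (y c)\<^sup>2)"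
    by (simp add: real_sqrt_mult)
  have "sqrt ((1 / real N) * (\<Sum>c<N. (x c)\<^sup>2)) * sqrt ((1 / real N) * (\<Sum>c<N. (y c)\<^sup>2))
      = (sqrt (1 / real N) * sqrt (1 / real N)) * (sqrt (\<Sum>c<N. (x c)\<^sup>2) * sqrt (\<Sum>c<N. (y c)\<^sup>2))"
    by (simp only: real_sqrt_mult mult_ac)
  also have "sqrt (1 / real N) * sqrt (1 / real N) = 1 / real N"
    using N by simp
  finally show ?thesis
    using CS N by (simp add: divide_right_mono)
qed

lemma sum_mat_1_minus_matpow_balanced:
  fixes Abar :: "nat \<Rightarrow> real^'d^'d" and w :: "nat \<Rightarrow> real^'d"
  assumes balanced: "(\<Sum>c\<in>C. Abar c *v w c) = 0"
  shows "(\<Sum>c\<in>C. (mat 1 - matpow (mat 1 - e *\<^sub>R Abar c) h) *v w c)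
    = e *\<^sub>R (\<Sum>c\<in>C. \<Sum>k<h. (matpow (mat 1 - e *\<^sub>R Abar c) k - matpow Q k) *v (Abar c *v w c))"
proof -
  have telescope: "(mat 1 - matpow (mat 1 - e *\<^sub>R Abar c) h) *v w c
      = e *\<^sub>R (\<Sum>k<h. matpow (mat 1 - e *\<^sub>R Abar c) k *v (Abar c *v w c))" for c
    unfolding mat_1_minus_matpow_mult_vec
    by (simp add: scaleR_matrix_vector_assoc[symmetric] matrix_vector_mult_scaleR scaleR_sum_right
        del: scaleR_matrix_vector_assoc)
  have Q_cancels: "(\<Sum>c\<in>C. \<Sum>k<h. matpow Q k *v (Abar c *v w c)) = 0"
    using balanced
    by (subst sum.swap) (simp add: linear_sum[OF matrix_vector_mul_linear, symmetric])
  have "(\<Sum>c\<in>C. (mat 1 - matpow (mat 1 - e *\<^sub>R Abar c) h) *v w c)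
      = e *\<^sub>R (\<Sum>c\<in>C. \<Sum>k<h. matpow (mat 1 - e *\<^sub>R Abar c) k *v (Abar c *v w c))"
    by (simp add: telescope scaleR_sum_right)
  then show ?thesis
    by (simp add: matrix_vector_mult_diff_rdistrib sum_subtractf Q_cancels)
qed

lemma norm_mean_local_drift_le:
  fixes N :: nat and Abar :: "nat \<Rightarrow> real^'d^'d" and w :: "nat \<Rightarrow> real^'d"
  defines "Aavg \<equiv> (1 / real N) *\<^sub>R (\<Sum>c<N. Abar c)"
  assumes N: "0 < N" and e: "0 \<le> e"
    and nonexpansive: "\<And>c. c < N \<Longrightarrow> opnorm (mat 1 - e *\<^sub>R Abar c) \<le> 1"
    and balanced: "(\<Sum>c<N. Abar c *v w c) = 0"
  shows "norm ((1 / real N) *\<^sub>R (\<Sum>c<N. (mat 1 - matpow (mat 1 - e *\<^sub>R Abar c) h) *v w c))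
    \<le> e\<^sup>2 * (real h)\<^sup>2 / 2 * ((1 / real N) * (\<Sum>c<N. norm (Abar c *v w c) * opnorm (Abar c - Aavg)))"
proof -
  define P where "P c = mat 1 - e *\<^sub>R Abar c" for c
  define Q where "Q = mat 1 - e *\<^sub>R Aavg"
  have P: "opnorm (P c) \<le> 1" if "c < N" for c
    unfolding P_def using that by (rule nonexpansive)
  have "Q = (1 / real N) *\<^sub>R (\<Sum>c<N. P c)"
    unfolding Q_def P_def Aavg_def using N
    by (simp add: sum_subtractf scaleR_diff_right scaleR_sum_right[symmetric] sum_constant_scaleR
        del: sum_constant)
  then have Q: "opnorm Q \<le> 1"
    using opnorm_mean_le_1[OF N P] by simp
  have P_minus_Q: "opnorm (P c - Q) = e * opnorm (Abar c - Aavg)" for c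
  proof -
    have "P c - Q = e *\<^sub>R (Aavg - Abar c)"
      unfolding P_def Q_def by (simp add: algebra_simps)
    then show ?thesis
      using e by (simp add: opnorm_scaleR opnorm_minus_commute)
  qed
  have "norm ((1 / real N) *\<^sub>R (\<Sum>c<N. (mat 1 - matpow (P c) h) *v w c))
      = (1 / real N) * e * norm (\<Sum>c<N. \<Sum>k<h. (matpow (P c) k - matpow Q k) *v (Abar c *v w c))"
    unfolding P_def sum_mat_1_minus_matpow_balanced[OF balanced, where Q = Q] using e by simp
  also have "\<dots> \<le> (1 / real N) * e * (\<Sum>c<N. (real h)\<^sup>2 / 2 * opnorm (P c - Q) * norm (Abar c *v w c))"
    using P Q e by (intro mult_left_mono order_trans[OF norm_sum] sum_mono norm_sum_matpow_diff_le) auto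
  also have "\<dots> = e\<^sup>2 * (real h)\<^sup>2 / 2 * ((1 / real N) * (\<Sum>c<N. norm (Abar c *v w c) * opnorm (Abar c - Aavg)))"
    by (simp add: P_minus_Q sum_distrib_left power2_eq_square mult_ac)
  finally show ?thesis
    unfolding P_def .
qed

theorem lemma2:
  fixes N :: nat
    and \<pi> :: "nat \<Rightarrow> 'z measure"
    and A :: "nat \<Rightarrow> 'z \<Rightarrow> real^'d^'d"
    and b :: "nat \<Rightarrow> 'z \<Rightarrow> real^'d"
    and Abar :: "nat \<Rightarrow> real^'d^'d"
    and bbar :: "nat \<Rightarrow> real^'d"
    and Aavg :: "real^'d^'d"
    and \<theta>s :: "real^'d"
    and \<theta>c :: "nat \<Rightarrow> real^'d"
    and p a \<eta>inf :: real
    and \<eta> :: "nat \<Rightarrow> real"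
    and H :: "nat \<Rightarrow> nat"
    and t :: nat
  assumes N_pos: "N \<ge> 1"
    and prob: "\<And>c. c < N \<Longrightarrow> prob_space (\<pi> c)"
    and A_meas: "\<And>c. c < N \<Longrightarrow> A c \<in> borel_measurable (\<pi> c)"
    and b_int: "\<And>c. c < N \<Longrightarrow> integrable (\<pi> c) (b c)"
    and Abar_def: "\<And>c. c < N \<Longrightarrow> Abar c = integral\<^sup>L (\<pi> c) (A c)"
    and bbar_def: "\<And>c. c < N \<Longrightarrow> bbar c = integral\<^sup>L (\<pi> c) (b c)"
    and Aavg_def: "Aavg = (1 / real N) *\<^sub>R (\<Sum>c<N. Abar c)"
    and \<theta>s_sol: "Aavg *v \<theta>s = (1 / real N) *\<^sub>R (\<Sum>c<N. bbar c)"
    and \<theta>c_sol: "\<And>c. c < N \<Longrightarrow> Abar c *v \<theta>c c = bbar c"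
    \<comment> \<open>Assumption A2 (boundedness part)\<close>
    and eps_bdd: "\<exists>B. \<forall>c<N. \<forall>z\<in>space (\<pi> c).
        norm ((A c z - Abar c) *v \<theta>c c - (b c z - bbar c)) \<le> B"
    and A_bdd: "\<exists>B. \<forall>c<N. \<forall>z\<in>space (\<pi> c).
        opnorm (A c z) \<le> B \<and> opnorm (A c z - Abar c) \<le> B"
    \<comment> \<open>Assumption A1(p)\<close>
    and p_ge: "p \<ge> 1"
    and hurw: "\<And>c. c < N \<Longrightarrow> hurwitz (- Abar c)"
    and a_pos: "a > 0" and \<eta>inf_pos: "\<eta>inf > 0" and \<eta>inf_a: "\<eta>inf * a \<le> 1 / 2"
    and A1: "\<And>c e u. c < N \<Longrightarrow> 0 < e \<Longrightarrow> e < \<eta>inf \<Longrightarrow>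
        (\<integral>z. norm ((mat 1 - e *\<^sub>R A c z) *v u) powr p \<partial>(\<pi> c)) powr (1 / p)
          \<le> (1 - e * a) * norm u"
    \<comment> \<open>step sizes\<close>
    and \<eta>_pos: "\<And>s. 0 < \<eta> s" and \<eta>_le: "\<And>s. \<eta> s \<le> \<eta>inf"
    and t_ge: "t \<ge> 1"
  shows "norm ((1 / real N) *\<^sub>R
            (\<Sum>c<N. (mat 1 - matpow (mat 1 - \<eta> t *\<^sub>R Abar c) (H t)) *v (\<theta>c c - \<theta>s)))
         \<le> (\<eta> t)\<^sup>2 * (real (H t))\<^sup>2 / 2
            * sqrt ((1 / real N) * (\<Sum>c<N. (norm (Abar c *v (\<theta>c c - \<theta>s)))\<^sup>2))
            * sqrt ((1 / real N) * (\<Sum>c<N. (opnorm (Abar c - Aavg))\<^sup>2))"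
proof -
  have N: "0 < N"
    using N_pos by simp
  obtain B where B: "\<forall>c<N. \<forall>z\<in>space (\<pi> c). opnorm (A c z) \<le> B \<and> opnorm (A c z - Abar c) \<le> B"
    using A_bdd by blast
  have nonexpansive: "opnorm (mat 1 - \<eta> t *\<^sub>R Abar c) \<le> 1" if c: "c < N" for c
  proof -
    interpret prob_space "\<pi> c"
      by (rule prob[OF c])
    show ?thesis
      unfolding Abar_def[OF c] using B c a_pos
      by (intro opnorm_mean_step_le_1[OF A_meas[OF c] _ p_ge _ \<eta>inf_pos \<eta>_pos \<eta>_le A1[OF c]]) auto
  qed
  have balanced: "(\<Sum>c<N. Abar c *v (\<theta>c c - \<theta>s)) = 0"
  proof -
    have "(\<Sum>c<N. Abar c *v (\<theta>c c - \<theta>s)) = (\<Sum>c<N. bbar c) - (\<Sum>c<N. Abar c) *v \<theta>s"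
      using \<theta>c_sol by (simp add: matrix_vector_mult_diff_distrib sum_subtractf matrix_vector_mult_sum_left)
    also have "(\<Sum>c<N. Abar c) *v \<theta>s = real N *\<^sub>R (Aavg *v \<theta>s)"
      using N unfolding Aavg_def by (simp add: scaleR_matrix_vector_assoc)
    also have "\<dots> = (\<Sum>c<N. bbar c)"
      using N \<theta>s_sol by simp
    finally show ?thesis
      by simp
  qed
  have "norm ((1 / real N) *\<^sub>R
            (\<Sum>c<N. (mat 1 - matpow (mat 1 - \<eta> t *\<^sub>R Abar c) (H t)) *v (\<theta>c c - \<theta>s)))
      \<le> (\<eta> t)\<^sup>2 * (real (H t))\<^sup>2 / 2
        * ((1 / real N) * (\<Sum>c<N. norm (Abar c *v (\<theta>c c - \<theta>s)) * opnorm (Abar c - Aavg)))"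
    using norm_mean_local_drift_le[OF N less_imp_le[OF \<eta>_pos] nonexpansive balanced]
    unfolding Aavg_def .
  also have "\<dots> \<le> (\<eta> t)\<^sup>2 * (real (H t))\<^sup>2 / 2
      * (sqrt ((1 / real N) * (\<Sum>c<N. (norm (Abar c *v (\<theta>c c - \<theta>s)))\<^sup>2))
        * sqrt ((1 / real N) * (\<Sum>c<N. (opnorm (Abar c - Aavg))\<^sup>2)))"
    using mean_mult_le_sqrt_mean_squares[OF N] by (intro mult_left_mono) auto
  finally show ?thesis
    by (simp add: mult.assoc)
qed

end
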